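(* Let $k\ge 3$. For every $m\in\mathbb{Z}_{>0}$, $E^{2m}\in M(1)^++C_2(V_L^+)$.
   Context: $L=\mathbb{Z}\alpha$, $\langle\alpha,\alpha\rangle=2k$; $V_L=M(1)\otimes\mathbb{C}[L]$ the lattice VOA, $\theta$ the involution $\alpha(-n_1)\cdots\alpha(-n_r)\otimes e^{\beta}\mapsto(-1)^r\alpha(-n_1)\cdots\alpha(-n_r)\otimes e^{-\beta}$, $V_L^+$ its fixed points, $M(1)^{\pm}$ the $\pm1$-eigenspaces of $\theta$ on $M(1)$ (spanned by monomials $\alpha(-n_1)\cdots\alpha(-n_r)\mathbf 1$ with $r$ even, resp. odd). We write $E^m=e^{m\alpha}+e^{-m\alpha}$, $F^m=e^{m\alpha}-e^{-m\alpha}$ (identifying $e^{\beta}$ with $\mathbf 1\otimes e^\beta$). $C_2(V)$ is the span of $\{v_{-2}u:u,v\in V\}$. *)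

theory Defs
  imports Complex_Main "HOL-Library.Multiset" "HOL-Library.Groups_Big_Fun"
begin

(* Basis of V_L = M(1) \<otimes> C[L], L = Z\<alpha>, <\<alpha>,\<alpha>> = 2k:
   (M, g) stands for  \<alpha>(-n_1)...\<alpha>(-n_r) 1 \<otimes> e^{g\<alpha>}  where M = {#n_1,...,n_r#}
   (all n_i \<ge> 1).  Vectors are finitely supported coefficient functions. *)
type_synonym bidx = "nat multiset \<times> int"
type_synonym vec = "bidx \<Rightarrow> complex"

definition bas :: "bidx \<Rightarrow> vec" where
  "bas b = (\<lambda>c. if c = b then 1 else 0)"

definition vsmult :: "complex \<Rightarrow> vec \<Rightarrow> vec" where
  "vsmult a v = (\<lambda>c. a * v c)"

definition lin :: "(bidx \<Rightarrow> vec) \<Rightarrow> vec \<Rightarrow> vec" where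
  "lin T v = (\<lambda>c. \<Sum>b\<in>{b. v b \<noteq> 0}. v b * T b c)"

definition fsum :: "('i \<Rightarrow> vec) \<Rightarrow> vec" where
  "fsum F = (\<lambda>c. Sum_any (\<lambda>i. F i c))"

(* Heisenberg operators \<alpha>(n): \<alpha>(-n) multiplication, \<alpha>(n) = 2k n \<partial>/\<partial>x_n (n>0),
   \<alpha>(0) acts on e^{g\<alpha>} by <\<alpha>, g\<alpha>> = 2kg *)
definition amode :: "nat \<Rightarrow> int \<Rightarrow> vec \<Rightarrow> vec" where
  "amode k n = lin (\<lambda>(M, g).
     if n < 0 then bas (M + {#nat (- n)#}, g)
     else if n = 0 then vsmult (of_int (2 * int k * g)) (bas (M, g))
     else vsmult (of_int (2 * int k * n * int (count M (nat n)))) (bas (M - {#nat n#}, g)))"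

(* product of Heisenberg operators, applied right-to-left along the list *)
definition aprod :: "nat \<Rightarrow> int list \<Rightarrow> vec \<Rightarrow> vec" where
  "aprod k ns v = fold (\<lambda>n w. amode k n w) ns v"

definition parts :: "nat \<Rightarrow> nat multiset set" where
  "parts j = {l. sum_mset l = j \<and> 0 \<notin># l}"

definition pcoef :: "complex \<Rightarrow> nat multiset \<Rightarrow> complex" where
  "pcoef c l = (\<Prod>n\<in>set_mset l. (c / of_nat n) ^ (count l n) / of_nat (fact (count l n)))"

(* coefficient of z^j in E^-(-m\<alpha>,z) = exp(\<Sum>_{n>0} m\<alpha>(-n) z^n / n) *)
definition Sminus :: "nat \<Rightarrow> int \<Rightarrow> nat \<Rightarrow> vec \<Rightarrow> vec" where
  "Sminus k m j v = (\<lambda>x. \<Sum>l\<in>parts j. pcoef (of_int m) l *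
      aprod k (map (\<lambda>n. - int n) (sorted_list_of_multiset l)) v x)"

(* coefficient of z^{-j} in E^+(-m\<alpha>,z) = exp(-\<Sum>_{n>0} m\<alpha>(n) z^{-n} / n) *)
definition Splus :: "nat \<Rightarrow> int \<Rightarrow> nat \<Rightarrow> vec \<Rightarrow> vec" where
  "Splus k m j v = (\<lambda>x. \<Sum>l\<in>parts j. pcoef (- of_int m) l *
      aprod k (map int (sorted_list_of_multiset l)) v x)"

(* (e^{m\<alpha>})_(q), where Y(e^\<beta>,z) = E^-(-\<beta>,z) E^+(-\<beta>,z) e_\<beta> z^\<beta> = \<Sum> (e^\<beta>)_(q) z^{-q-1}
   (trivial cocycle: L is even of rank one) *)
definition emode :: "nat \<Rightarrow> int \<Rightarrow> int \<Rightarrow> vec \<Rightarrow> vec" where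
  "emode k m q = lin (\<lambda>(M, g). fsum (\<lambda>j::nat.
     let i = - q - 1 - 2 * int k * m * g + int j in
     if 0 \<le> i then Sminus k m (nat i) (Splus k m j (bas (M, g + m))) else (\<lambda>_. 0)))"

(* modes (\<alpha>(-n_1)..\<alpha>(-n_r) e^{g\<alpha>})_(q), by recursion on r via the iterate formula
   (a_(p) b)_(q) = \<Sum>_{j\<ge>0} (-1)^j (p choose j) (a_(p-j) b_(q+j) - (-1)^p b_(p+q-j) a_(j)),
   with a = \<alpha>(-1)1, a_(p) = \<alpha>(p), p = -n, n = Max M. First argument r = size M. *)
primrec ym :: "nat \<Rightarrow> nat \<Rightarrow> nat multiset \<Rightarrow> int \<Rightarrow> int \<Rightarrow> vec \<Rightarrow> vec" where
  "ym k 0 M g q u = emode k g q u"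
| "ym k (Suc r) M g q u =
     (let n = Max_mset M; M' = M - {#n#} in
      fsum (\<lambda>j::nat. \<lambda>c.
        (-1) ^ j * ((- of_nat n :: complex) gchoose j) *
        (amode k (- int n - int j) (ym k r M' g (q + int j) u) c
         - (-1) ^ n * ym k r M' g (- int n + q - int j) (amode k (int j) u) c)))"

definition vmode :: "nat \<Rightarrow> vec \<Rightarrow> int \<Rightarrow> vec \<Rightarrow> vec" where
  "vmode k v q u = (\<lambda>c. \<Sum>b\<in>{b. v b \<noteq> 0}.
      v b * ym k (size (fst b)) (fst b) (snd b) q u c)"

definition VL :: "vec set" where
  "VL = {v. finite {b. v b \<noteq> 0} \<and> (\<forall>M g. 0 \<in># M \<longrightarrow> v (M, g) = 0)}"

definition theta :: "vec \<Rightarrow> vec" where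
  "theta v = (\<lambda>(M, g). (-1) ^ (size M) * v (M, - g))"

definition VLplus :: "vec set" where
  "VLplus = {v \<in> VL. theta v = v}"

definition M1plus :: "vec set" where
  "M1plus = {v \<in> VL. \<forall>M g. v (M, g) \<noteq> 0 \<longrightarrow> g = 0 \<and> even (size M)}"

definition cspan :: "vec set \<Rightarrow> vec set" where
  "cspan S = {v. \<exists>(n::nat) (c::nat \<Rightarrow> complex) s. (\<forall>i<n. s i \<in> S) \<and>
                   v = (\<lambda>x. \<Sum>i<n. c i * s i x)}"

definition C2plus :: "nat \<Rightarrow> vec set" where
  "C2plus k = cspan {vmode k v (-2) u | u v. u \<in> VLplus \<and> v \<in> VLplus}"

definition Evec :: "int \<Rightarrow> vec" where
  "Evec m = (\<lambda>x. bas ({#}, m) x + bas ({#}, - m) x)"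

end

theory Submission
  imports Defs
begin

(* Put \<beta> = m\<alpha>, N = <\<beta>,\<beta>> - 1 = 2km^2 - 1 and u = \<alpha>(-N) F^m, a vector of V_L^+.
   In Y(e^{\<beta>}, z) \<alpha>(-N) e^{\<beta>} the lowest power of z is z^{<\<beta>,\<beta>> - N} = z, coming from
   the contraction of \<alpha>(-N) with E^+(-\<beta>, z); so e^{\<beta>}_(-2) \<alpha>(-N) e^{\<beta>} = -<\<alpha>,\<beta>> e^{2\<beta>},
   and likewise for -\<beta>.  The cross terms e^{\<pm>\<beta>}_(-2) \<alpha>(-N) e^{\<mp>\<beta>} lie in M(1), and \<theta>
   maps one to minus the other, so their difference is a \<theta>-invariant vector of M(1), i.e. lies
   in M(1)^+.  Hence (E^m)_(-2) u = -2km E^{2m} + (element of M(1)^+), while (E^m)_(-2) u lies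
   in C_2(V_L^+). *)

lemma size_le_sum_mset: "0 \<notin># (l::nat multiset) \<Longrightarrow> size l \<le> sum_mset l"
  by (induction l) auto

lemma member_le_sum_mset: "(x::nat) \<in># l \<Longrightarrow> x \<le> sum_mset l"
  by (induction l) auto

lemma finite_parts: "finite (parts j)"
proof (rule finite_subset)
  show "parts j \<subseteq> (\<Union>s\<le>j. multisets_of_size {..j} s)"
    using size_le_sum_mset member_le_sum_mset
    unfolding parts_def multisets_of_size_def by fastforce
qed auto

lemma parts_0: "parts 0 = {{#}}"
  unfolding parts_def by (auto simp: sum_mset_0_iff) (metis multiset_nonemptyE)

lemma parts_pos: "l \<in> parts j \<Longrightarrow> \<forall>n\<in>set (sorted_list_of_multiset l). n > 0"
  unfolding parts_def by (auto intro!: gr0I)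

lemma pcoef_empty: "pcoef c {#} = 1"
  unfolding pcoef_def by simp

lemma pcoef_single: "n > 0 \<Longrightarrow> pcoef c {#n#} = c / of_nat n"
  unfolding pcoef_def by simp

lemma pcoef_uminus: "pcoef (- c) l = (-1) ^ size l * pcoef c l"
proof -
  have "pcoef (- c) l = (\<Prod>n\<in>set_mset l. (-1) ^ count l n * ((c / of_nat n) ^ count l n / of_nat (fact (count l n))))"
    unfolding pcoef_def by (intro prod.cong) (auto simp: power_mult_distrib[symmetric])
  also have "\<dots> = (\<Prod>n\<in>set_mset l. (-1) ^ count l n) * pcoef c l"
    unfolding pcoef_def prod.distrib by simp
  also have "(\<Prod>n\<in>set_mset l. (-1::complex) ^ count l n) = (-1) ^ size l"
    by (simp add: power_sum size_multiset_overloaded_eq)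
  finally show ?thesis .
qed

lemma lin_eq_sum: "finite S \<Longrightarrow> {b. v b \<noteq> 0} \<subseteq> S \<Longrightarrow> lin T v c = (\<Sum>b\<in>S. v b * T b c)"
  unfolding lin_def by (rule sum.mono_neutral_left) auto

lemma lin_bas: "lin T (bas b) = T b"
proof
  fix c show "lin T (bas b) c = T b c"
    by (subst lin_eq_sum[of "{b}"]) (auto simp: bas_def)
qed

lemma lin_diff_bas: "b \<noteq> b' \<Longrightarrow> lin T (\<lambda>x. bas b x - bas b' x) = (\<lambda>c. T b c - T b' c)"
  by (rule ext, subst lin_eq_sum[of "{b, b'}"]) (auto simp: bas_def)

lemma lin_zero: "lin T (\<lambda>_. 0) = (\<lambda>_. 0)"
  unfolding lin_def by simp

lemma lin_vsmult: "lin T (vsmult a v) = vsmult a (lin T v)"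
proof (cases "a = 0")
  case True
  then show ?thesis unfolding lin_def vsmult_def by simp
next
  case False
  then have "{b. vsmult a v b \<noteq> 0} = {b. v b \<noteq> 0}" unfolding vsmult_def by auto
  then show ?thesis unfolding lin_def vsmult_def by (auto simp: sum_distrib_left mult.assoc)
qed

lemma vsmult_0_left: "vsmult 0 v = (\<lambda>_. 0)"
  unfolding vsmult_def by simp

lemma vsmult_0_right: "vsmult a (\<lambda>_. 0) = (\<lambda>_. 0)"
  unfolding vsmult_def by simp

lemma amode_zero: "amode k n (\<lambda>_. 0) = (\<lambda>_. 0)"
  unfolding amode_def by (rule lin_zero)

lemma amode_vsmult: "amode k n (vsmult a v) = vsmult a (amode k n v)"
  unfolding amode_def by (rule lin_vsmult)

lemma amode_neg_bas: "n > 0 \<Longrightarrow> amode k (- int n) (bas (M, g)) = bas (M + {#n#}, g)"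
  unfolding amode_def lin_bas by simp

lemma amode_pos_bas: "n > 0 \<Longrightarrow> amode k (int n) (bas (M, g)) =
    vsmult (of_int (2 * int k * int n * int (count M n))) (bas (M - {#n#}, g))"
  unfolding amode_def lin_bas by simp

lemma aprod_Nil: "aprod k [] v = v"
  unfolding aprod_def by simp

lemma aprod_Cons: "aprod k (n # ns) v = aprod k ns (amode k n v)"
  unfolding aprod_def by simp

lemma aprod_zero: "aprod k ns (\<lambda>_. 0) = (\<lambda>_. 0)"
  by (induction ns) (simp_all add: aprod_Nil aprod_Cons amode_zero)

lemma aprod_vsmult: "aprod k ns (vsmult a v) = vsmult a (aprod k ns v)"
  by (induction ns arbitrary: v) (simp_all add: aprod_Nil aprod_Cons amode_vsmult)

lemma aprod_neg_bas: "\<forall>n\<in>set xs. n > 0 \<Longrightarrow>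
    aprod k (map (\<lambda>n. - int n) xs) (bas (M, g)) = bas (M + mset xs, g)"
  by (induction xs arbitrary: M) (simp_all add: aprod_Nil aprod_Cons amode_neg_bas add.assoc)

lemma aprod_pos_bas_empty: "\<forall>n\<in>set xs. n > 0 \<Longrightarrow> xs \<noteq> [] \<Longrightarrow>
    aprod k (map int xs) (bas ({#}, h)) = (\<lambda>_. 0)"
  by (cases xs) (simp_all add: aprod_Cons amode_pos_bas vsmult_0_left aprod_zero)

lemma aprod_pos_bas_single:
  assumes "0 \<notin># l" and "l \<noteq> {#}"
  shows "aprod k (map int (sorted_list_of_multiset l)) (bas ({#N#}, h)) =
    (if l = {#N#} then vsmult (of_int (2 * int k * int N)) (bas ({#}, h)) else (\<lambda>_. 0))"
proof -
  have "sorted_list_of_multiset l \<noteq> []"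
    using assms(2) by (metis mset.simps(1) mset_sorted_list_of_multiset)
  then obtain x xs where xs: "sorted_list_of_multiset l = x # xs"
    by (meson neq_Nil_conv)
  then have l: "l = add_mset x (mset xs)"
    by (metis mset.simps(2) mset_sorted_list_of_multiset)
  then have pos: "x > 0" "\<forall>n\<in>set xs. n > 0"
    using assms(1) by (auto intro!: gr0I)
  have "l = {#N#} \<longleftrightarrow> x = N \<and> xs = []"
    using l by auto
  then show ?thesis
    using pos by (cases "xs = []")
      (auto simp: xs aprod_Nil aprod_Cons amode_pos_bas aprod_vsmult aprod_pos_bas_empty
        vsmult_0_left vsmult_0_right)
qed

section \<open>The vertex operator of e^{g\<alpha>} on \<alpha>(-N) e^{h\<alpha>}\<close>

lemma Sminus_0: "Sminus k c 0 v = v"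
  unfolding Sminus_def parts_0 by (simp add: pcoef_empty aprod_Nil)

lemma Splus_0: "Splus k c 0 v = v"
  unfolding Splus_def parts_0 by (simp add: pcoef_empty aprod_Nil)

lemma Sminus_zero: "Sminus k c i (\<lambda>_. 0) = (\<lambda>_. 0)"
  unfolding Sminus_def by (simp add: aprod_zero)

lemma Sminus_vsmult: "Sminus k c i (vsmult a v) = vsmult a (Sminus k c i v)"
  unfolding Sminus_def aprod_vsmult unfolding vsmult_def
  by (simp add: sum_distrib_left mult.left_commute)

lemma Sminus_bas_apply: "Sminus k c i (bas (M0, g)) (M, g') =
    (if g' = g \<and> M0 \<subseteq># M \<and> M - M0 \<in> parts i then pcoef c (M - M0) else 0)"
proof -
  have "Sminus k c i (bas (M0, g)) (M, g') =
      (\<Sum>l\<in>parts i. if M - M0 = l then (if g' = g \<and> M0 \<subseteq># M then pcoef c l else 0) else 0)"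
    unfolding Sminus_def
    by (intro sum.cong refl) (simp add: aprod_neg_bas[OF parts_pos], auto simp: bas_def)
  also have "\<dots> = (if M - M0 \<in> parts i then (if g' = g \<and> M0 \<subseteq># M then pcoef c (M - M0) else 0) else 0)"
    by (rule sum.delta'[OF finite_parts])
  finally show ?thesis by auto
qed

lemma Splus_bas_single:
  assumes "N > 0"
  shows "Splus k c j (bas ({#N#}, h)) = (if j = 0 then bas ({#N#}, h)
     else if j = N then vsmult (- (2 * of_nat k * of_int c)) (bas ({#}, h)) else (\<lambda>_. 0))"
proof (cases "j = 0")
  case True
  then show ?thesis by (simp add: Splus_0)
next
  case False
  then have nonempty: "0 \<notin># l \<and> l \<noteq> {#}" if "l \<in> parts j" for l
    using that unfolding parts_def by auto
  have "Splus k c j (bas ({#N#}, h)) = (\<lambda>x. \<Sum>l\<in>parts j. if {#N#} = l then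
      pcoef (- of_int c) l * vsmult (of_int (2 * int k * int N)) (bas ({#}, h)) x else 0)"
    unfolding Splus_def
    by (intro ext sum.cong refl) (auto simp: aprod_pos_bas_single nonempty)
  also have "\<dots> = (\<lambda>x. if {#N#} \<in> parts j then
      pcoef (- of_int c) {#N#} * vsmult (of_int (2 * int k * int N)) (bas ({#}, h)) x else 0)"
    by (intro ext sum.delta'[OF finite_parts])
  also have "{#N#} \<in> parts j \<longleftrightarrow> j = N"
    using assms unfolding parts_def by auto
  finally show ?thesis
    using False assms by (auto simp: pcoef_single vsmult_def)
qed

text \<open>Of the series E^+(-g\<alpha>, z) only the constant term and the contraction \<alpha>(N) \<alpha>(-N) survive.\<close>

lemma emode_bas_single:
  fixes k N :: nat and g0 g q :: int
  assumes "N > 0"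
  defines "i \<equiv> - q - 1 - 2 * int k * g0 * g"
  shows "emode k g0 q (bas ({#N#}, g)) x =
    (if 0 \<le> i then Sminus k g0 (nat i) (bas ({#N#}, g + g0)) x else 0) +
    (if 0 \<le> i + int N then Sminus k g0 (nat (i + int N))
        (vsmult (- (2 * of_nat k * of_int g0)) (bas ({#}, g + g0))) x else 0)"
proof -
  define summand where "summand = (\<lambda>j::nat. (if 0 \<le> i + int j
     then Sminus k g0 (nat (i + int j)) (Splus k g0 j (bas ({#N#}, g + g0))) else (\<lambda>_. 0)) x)"
  have "emode k g0 q (bas ({#N#}, g)) x = Sum_any summand"
    unfolding emode_def lin_bas fsum_def summand_def i_def by (simp add: Let_def)
  also have "\<dots> = sum summand {0, N}"
  proof (rule Sum_any.expand_superset)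
    show "{j. summand j \<noteq> 0} \<subseteq> {0, N}"
      using assms(1) by (auto simp: summand_def Splus_bas_single Sminus_zero split: if_splits)
  qed simp
  also have "\<dots> = summand 0 + summand N"
    using assms(1) by simp
  finally show ?thesis
    unfolding summand_def using assms(1) by (simp add: Splus_bas_single Splus_0)
qed

lemma Sminus_bas_in_VL:
  assumes "0 \<notin># M0"
  shows "Sminus k c j (bas (M0, g)) \<in> VL"
  unfolding VL_def
proof (intro CollectI conjI allI impI)
  show "finite {b. Sminus k c j (bas (M0, g)) b \<noteq> 0}"
  proof (rule finite_subset)
    show "{b. Sminus k c j (bas (M0, g)) b \<noteq> 0} \<subseteq> (\<lambda>l. (M0 + l, g)) ` parts j"
      by (auto simp: Sminus_bas_apply subset_mset.add_diff_inverse split: if_splits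
          intro!: image_eqI)
  qed (simp add: finite_parts)
next
  fix M :: "nat multiset" and h :: int
  assume "0 \<in># M"
  then show "Sminus k c j (bas (M0, g)) (M, h) = 0"
    using assms by (auto simp: Sminus_bas_apply parts_def)
      (metis subset_mset.add_diff_inverse union_iff)
qed

lemma VL_diff_scaled:
  assumes "a \<in> VL" and "b \<in> VL"
  shows "(\<lambda>x. a x - c * b x) \<in> VL"
proof -
  have "{x. a x - c * b x \<noteq> 0} \<subseteq> {x. a x \<noteq> 0} \<union> {x. b x \<noteq> 0}"
    by auto
  then show ?thesis
    using assms unfolding VL_def by (auto intro: finite_subset)
qed

lemma theta_Sminus_bas:
  "theta (Sminus k c j (bas (M0, g))) = vsmult ((-1) ^ size M0) (Sminus k (- c) j (bas (M0, - g)))"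
proof (rule ext, clarify)
  fix M h
  show "theta (Sminus k c j (bas (M0, g))) (M, h) =
      vsmult ((-1) ^ size M0) (Sminus k (- c) j (bas (M0, - g))) (M, h)"
  proof (cases "M0 \<subseteq># M")
    case True
    then have "size M = size M0 + size (M - M0)"
      by (metis size_union subset_mset.add_diff_inverse)
    then show ?thesis
      by (auto simp: theta_def vsmult_def Sminus_bas_apply pcoef_uminus power_add)
  qed (simp add: theta_def vsmult_def Sminus_bas_apply)
qed

lemma symmetrization_in_M1plus:
  assumes "v \<in> VL" and lattice_0: "\<And>M h. v (M, h) \<noteq> 0 \<Longrightarrow> h = 0"
  shows "(\<lambda>x. v x + theta v x) \<in> M1plus"
proof -
  have theta_v: "theta v (M, h) = (-1) ^ size M * v (M, - h)" for M h
    by (simp add: theta_def)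
  have fin: "finite {x. v x \<noteq> 0}" and no_0: "\<And>M h. 0 \<in># M \<Longrightarrow> v (M, h) = 0"
    using assms(1) unfolding VL_def by auto
  have "{x. v x + theta v x \<noteq> 0} \<subseteq> {x. v x \<noteq> 0} \<union> apsnd uminus ` {x. v x \<noteq> 0}"
  proof
    fix x
    assume x: "x \<in> {x. v x + theta v x \<noteq> 0}"
    show "x \<in> {x. v x \<noteq> 0} \<union> apsnd uminus ` {x. v x \<noteq> 0}"
    proof (cases "v x = 0")
      case True
      obtain M h where Mh: "x = (M, h)"
        by force
      with x True have "v (M, - h) \<noteq> 0"
        by (simp add: theta_def)
      then show ?thesis
        using Mh by (auto intro: image_eqI[of _ _ "(M, - h)"])
    qed simp
  qed
  then have finite_support: "finite {x. v x + theta v x \<noteq> 0}"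
    by (rule finite_subset) (use fin in auto)
  have in_M1plus: "h = 0 \<and> even (size M)" if nonzero: "v (M, h) + theta v (M, h) \<noteq> 0" for M h
  proof
    show "h = 0"
    proof (rule ccontr)
      assume "h \<noteq> 0"
      then have "v (M, h) = 0" and "v (M, - h) = 0"
        using lattice_0[of M h] lattice_0[of M "- h"] by auto
      then show False
        using nonzero by (simp add: theta_v)
    qed
    show "even (size M)"
    proof (rule ccontr)
      assume "odd (size M)"
      then show False
        using nonzero \<open>h = 0\<close> by (simp add: theta_v)
    qed
  qed
  show ?thesis
    unfolding M1plus_def VL_def
  proof (intro CollectI conjI allI impI finite_support)
    fix M :: "nat multiset" and h :: int
    assume "0 \<in># M"
    then show "v (M, h) + theta v (M, h) = 0"
      by (simp add: theta_v no_0)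
  qed (use in_M1plus in blast)+
qed

lemma M1plus_vsmult: "v \<in> M1plus \<Longrightarrow> vsmult c v \<in> M1plus"
proof -
  assume v: "v \<in> M1plus"
  have "{x. vsmult c v x \<noteq> 0} \<subseteq> {x. v x \<noteq> 0}"
    by (auto simp: vsmult_def)
  then show ?thesis
    using v unfolding M1plus_def VL_def by (auto simp: vsmult_def intro: finite_subset)
qed

lemma Evec_in_VLplus: "Evec m \<in> VLplus"
  unfolding VLplus_def VL_def
proof (intro CollectI conjI allI impI)
  show "finite {b. Evec m b \<noteq> 0}"
    by (rule finite_subset[of _ "{({#}, m), ({#}, - m)}"]) (auto simp: Evec_def bas_def)
  show "theta (Evec m) = Evec m"
    by (auto simp: theta_def Evec_def bas_def)
qed (auto simp: Evec_def bas_def)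

definition alpha_F :: "nat \<Rightarrow> int \<Rightarrow> vec" where
  "alpha_F N m = (\<lambda>x. bas ({#N#}, m) x - bas ({#N#}, - m) x)"

lemma alpha_F_in_VLplus: "N > 0 \<Longrightarrow> alpha_F N m \<in> VLplus"
  unfolding VLplus_def VL_def
proof (intro CollectI conjI allI impI)
  show "finite {b. alpha_F N m b \<noteq> 0}"
    by (rule finite_subset[of _ "{({#N#}, m), ({#N#}, - m)}"]) (auto simp: alpha_F_def bas_def)
  show "theta (alpha_F N m) = alpha_F N m"
    by (auto simp: theta_def alpha_F_def bas_def)
qed (auto simp: alpha_F_def bas_def)

lemma vmode_in_C2plus:
  "u \<in> VLplus \<Longrightarrow> v \<in> VLplus \<Longrightarrow> vsmult c (vmode k v (-2) u) \<in> C2plus k"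
  unfolding C2plus_def cspan_def vsmult_def
  by (rule CollectI, rule exI[of _ 1], rule exI[of _ "\<lambda>_. c"],
      rule exI[of _ "\<lambda>_. vmode k v (-2) u"]) auto

section \<open>The (-2)-mode of E^m on \<alpha>(-N) F^m\<close>

lemma emode_same_sign:
  assumes "N > 0" and "2 * int k * g\<^sup>2 = int N + 1"
  shows "emode k g (-2) (bas ({#N#}, g)) = vsmult (- (2 * of_nat k * of_int g)) (bas ({#}, 2 * g))"
proof
  fix x
  have exponent: "- (-2) - 1 - 2 * int k * g * g = - int N"
    using assms(2) unfolding power2_eq_square by (simp add: mult.assoc)
  show "emode k g (-2) (bas ({#N#}, g)) x = vsmult (- (2 * of_nat k * of_int g)) (bas ({#}, 2 * g)) x"
    using emode_bas_single[OF assms(1), of k g "-2" g x] assms(1) unfolding exponent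
    by (simp add: Sminus_0 flip: mult_2)
qed

definition cross_term :: "nat \<Rightarrow> nat \<Rightarrow> int \<Rightarrow> vec" where
  "cross_term k N g = (\<lambda>x. Sminus k g (N + 2) (bas ({#N#}, 0)) x
      - 2 * of_nat k * of_int g * Sminus k g (2 * N + 2) (bas ({#}, 0)) x)"

lemma emode_opposite_sign:
  assumes "N > 0" and "2 * int k * g\<^sup>2 = int N + 1"
  shows "emode k g (-2) (bas ({#N#}, - g)) = cross_term k N g"
proof
  fix x
  have exponent: "- (-2) - 1 - 2 * int k * g * - g = int N + 2"
    using assms(2) unfolding power2_eq_square by (simp add: mult.assoc)
  have "nat (int N + 2 + int N) = 2 * N + 2"
    by simp
  then show "emode k g (-2) (bas ({#N#}, - g)) x = cross_term k N g x"
    using emode_bas_single[OF assms(1), of k g "-2" "- g" x] unfolding exponent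
    by (simp add: Sminus_vsmult nat_add_distrib, simp add: vsmult_def cross_term_def)
qed

lemma theta_cross_term: "theta (cross_term k N g) = (\<lambda>x. - cross_term k N (- g) x)"
proof -
  have theta_diff: "theta (\<lambda>x. a x - c * b x) = (\<lambda>x. theta a x - c * theta b x)" for a b c
    by (simp add: theta_def fun_eq_iff right_diff_distrib mult.left_commute)
  have "theta (cross_term k N g) = (\<lambda>x. theta (Sminus k g (N + 2) (bas ({#N#}, 0))) x
      - 2 * of_nat k * of_int g * theta (Sminus k g (2 * N + 2) (bas ({#}, 0))) x)"
    unfolding cross_term_def by (rule theta_diff)
  also have "\<dots> = (\<lambda>x. - cross_term k N (- g) x)"
    unfolding theta_Sminus_bas by (simp add: vsmult_def cross_term_def)
  finally show ?thesis .
qed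

lemma cross_term_in_VL: "N > 0 \<Longrightarrow> cross_term k N g \<in> VL"
  unfolding cross_term_def by (intro VL_diff_scaled Sminus_bas_in_VL) auto

lemma cross_term_in_M1: "cross_term k N g (M, h) \<noteq> 0 \<Longrightarrow> h = 0"
  by (auto simp: cross_term_def Sminus_bas_apply split: if_splits)

lemma vmode_Evec:
  assumes "m \<noteq> 0"
  shows "vmode k (Evec m) q u = (\<lambda>x. emode k m q u x + emode k (- m) q u x)"
proof
  fix x
  have "vmode k (Evec m) q u x =
      (\<Sum>b\<in>{({#}, m), ({#}, - m)}. Evec m b * ym k (size (fst b)) (fst b) (snd b) q u x)"
    unfolding vmode_def by (rule sum.mono_neutral_left) (auto simp: Evec_def bas_def)
  then show "vmode k (Evec m) q u x = emode k m q u x + emode k (- m) q u x"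
    using assms by (simp add: Evec_def bas_def)
qed

lemma emode_alpha_F:
  assumes "m \<noteq> 0"
  shows "emode k g q (alpha_F N m) =
    (\<lambda>x. emode k g q (bas ({#N#}, m)) x - emode k g q (bas ({#N#}, - m)) x)"
  using assms unfolding emode_def alpha_F_def by (simp add: lin_diff_bas lin_bas)

lemma vmode_Evec_alpha_F:
  assumes "N > 0" and "2 * int k * m\<^sup>2 = int N + 1"
  shows "vmode k (Evec m) (-2) (alpha_F N m) = (\<lambda>x. - (2 * of_nat k * of_int m) * Evec (2 * m) x
      + cross_term k N (- m) x - cross_term k N m x)"
proof -
  have minus_m: "2 * int k * (- m)\<^sup>2 = int N + 1"
    using assms(2) by simp
  have "m \<noteq> 0"
    using assms(2) by auto
  then have
    "vmode k (Evec m) (-2) (alpha_F N m) = (\<lambda>x.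
       (emode k m (-2) (bas ({#N#}, m)) x - emode k m (-2) (bas ({#N#}, - m)) x)
     + (emode k (- m) (-2) (bas ({#N#}, - (- m))) x - emode k (- m) (-2) (bas ({#N#}, - m)) x))"
    by (simp add: vmode_Evec emode_alpha_F)
  also have "\<dots> = (\<lambda>x. - (2 * of_nat k * of_int m) * Evec (2 * m) x
      + cross_term k N (- m) x - cross_term k N m x)"
    using emode_same_sign[OF assms] emode_same_sign[OF assms(1) minus_m]
      emode_opposite_sign[OF assms] emode_opposite_sign[OF assms(1) minus_m]
    by (simp add: fun_eq_iff vsmult_def Evec_def algebra_simps)
  finally show ?thesis .
qed

theorem lemma4p1:
  fixes k :: nat and m :: int
  assumes "k \<ge> 3" and "m > 0"
  shows "\<exists>a c. a \<in> M1plus \<and> c \<in> C2plus k \<and> Evec (2 * m) = (\<lambda>x. a x + c x)"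
proof -
  define N where "N = nat (2 * int k * m\<^sup>2 - 1)"
  have "2 * 1 * 1 \<le> 2 * int k * m\<^sup>2"
    using assms by (intro mult_mono) (auto intro: one_le_power)
  then have N_plus_1: "2 * int k * m\<^sup>2 = int N + 1" and "N > 0"
    unfolding N_def by linarith+
  define K :: complex where "K = 2 * of_nat k * of_int m"
  have "K \<noteq> 0"
    using assms unfolding K_def by auto
  define Z where "Z = (\<lambda>x. cross_term k N (- m) x + theta (cross_term k N (- m)) x)"
  define W where "W = vmode k (Evec m) (-2) (alpha_F N m)"
  have "Z \<in> M1plus"
    unfolding Z_def using \<open>N > 0\<close>
    by (intro symmetrization_in_M1plus cross_term_in_VL cross_term_in_M1)
  have "W = (\<lambda>x. - K * Evec (2 * m) x + Z x)"
    unfolding W_def vmode_Evec_alpha_F[OF \<open>N > 0\<close> N_plus_1] Z_def theta_cross_term K_def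
    by (simp add: fun_eq_iff)
  then have "Evec (2 * m) = (\<lambda>x. vsmult (1 / K) Z x + vsmult (- 1 / K) W x)"
    using \<open>K \<noteq> 0\<close> by (simp add: vsmult_def fun_eq_iff field_simps)
  moreover have "vsmult (- 1 / K) W \<in> C2plus k"
    unfolding W_def using \<open>N > 0\<close> by (intro vmode_in_C2plus alpha_F_in_VLplus Evec_in_VLplus)
  ultimately show ?thesis
    using M1plus_vsmult[OF \<open>Z \<in> M1plus\<close>] by blast
qed

end
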